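(* Let $i,m\in\mathbb{N}$ and $A=(a_0,\dots,a_i)\in\mathbb{N}^*$. Then \[ \begin{pmatrix} p_i & q_i \\ p_{i-1} & q_{i-1}\end{pmatrix} = \begin{pmatrix} \tilde p_i & \tilde p_{i-1} \\ \tilde q_i & \tilde q_{i-1}\end{pmatrix}. \] Furthermore, $A$ is $m$-palindromic if and only if \[ \begin{pmatrix} p_i & m q_i \\ p_{i-1} & q_{i-1}\end{pmatrix} = \begin{pmatrix} \tilde p_i & \tilde q_i \\ m\tilde p_{i-1} & \tilde q_{i-1}\end{pmatrix}. \] Equivalently, $A$ is $m$-palindromic if and only if $m q_i = p_{i-1}$.
   Context: $\mathbb{N}$ denotes the positive integers and $\mathbb{N}^*$ the set of finite sequences of positive integers. For a finite sequence $(a_0,\dots,a_i)$, $[a_0,\dots,a_i]$ denotes the (finite) continued fraction with partial quotients $a_0,\dots,a_i$. For $A=(a_0,\dots,a_i)$, the convergents are $[a_0,\dots,a_k]=p_k/q_k$ in lowest terms ($0\le k\le i$), with $p_{-1}=1$, $q_{-1}=0$; equivalently $\begin{pmatrix} p_i & p_{i-1}\\ q_i & q_{i-1}\end{pmatrix}=\begin{pmatrix} a_0&1\\1&0\end{pmatrix}\cdots\begin{pmatrix} a_i&1\\1&0\end{pmatrix}$. The reversal of $A$ is $\widetilde A=(a_i,\dots,a_0)$, and its convergents are denoted $\tilde p_k/\tilde q_k$ ($0\le k\le i$). A finite sequence $A$ is called $m$-palindromic (an $m$-palindrome) if $[A]=m[\widetilde A]$. *)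

theory Defs
  imports Complex_Main
begin

text \<open>Finite sequences (a_0,...,a_i) of positive integers are nonempty lists of nats
  with all entries > 0. A 2x2 matrix [[a,b],[c,d]] is represented as the tuple (a,b,c,d).\<close>

type_synonym mat2 = "nat \<times> nat \<times> nat \<times> nat"

fun mat2_mult :: "mat2 \<Rightarrow> mat2 \<Rightarrow> mat2" where
  "mat2_mult (a,b,c,d) (e,f,g,h) = (a*e + b*g, a*f + b*h, c*e + d*g, c*f + d*h)"

text \<open>The matrix [[p_i, p_{i-1}],[q_i, q_{i-1}]] = prod_k [[a_k,1],[1,0]];
  for the empty list this is the identity, i.e. (p_{-1}, q_{-1}) = (1, 0).\<close>
fun cf_mat :: "nat list \<Rightarrow> mat2" where
  "cf_mat [] = (1,0,0,1)"
| "cf_mat (a # as) = mat2_mult (a,1,1,0) (cf_mat as)"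

definition cf_p :: "nat list \<Rightarrow> nat" where "cf_p A = fst (cf_mat A)"
definition cf_pprev :: "nat list \<Rightarrow> nat" where "cf_pprev A = fst (snd (cf_mat A))"
definition cf_q :: "nat list \<Rightarrow> nat" where "cf_q A = fst (snd (snd (cf_mat A)))"
definition cf_qprev :: "nat list \<Rightarrow> nat" where "cf_qprev A = snd (snd (snd (cf_mat A)))"

fun cf_val :: "nat list \<Rightarrow> rat" where
  "cf_val [] = 0"
| "cf_val [a] = of_nat a"
| "cf_val (a # as) = of_nat a + 1 / cf_val as"

definition m_palindromic :: "nat \<Rightarrow> nat list \<Rightarrow> bool" where
  "m_palindromic m A \<longleftrightarrow> cf_val A = of_nat m * cf_val (rev A)"

end

theory Submission
  imports Defs
begin

text \<open>Each factor [[a_k,1],[1,0]] is symmetric, so transposing the product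
  prod_k [[a_k,1],[1,0]] reverses the order of the factors: the matrix of the reversed
  sequence is the transpose. Since the p_i and q_i are positive and
  [A] = p_i/q_i, [rev A] = p_i/p_{i-1}, the equation [A] = m [rev A] reduces
  to m q_i = p_{i-1}, and the matrix form of this condition is then a rearrangement.\<close>

fun mat2_transpose :: "mat2 \<Rightarrow> mat2" where
  "mat2_transpose (a,b,c,d) = (a,c,b,d)"

lemma mat2_mult_assoc: "mat2_mult (mat2_mult x y) z = mat2_mult x (mat2_mult y z)"
  by (cases x; cases y; cases z) (simp add: algebra_simps)

lemma mat2_transpose_mult:
  "mat2_transpose (mat2_mult x y) = mat2_mult (mat2_transpose y) (mat2_transpose x)"
  by (cases x; cases y) (simp add: algebra_simps)

lemma cf_mat_snoc: "cf_mat (xs @ [a]) = mat2_mult (cf_mat xs) (a,1,1,0)"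
  by (induction xs) (simp_all add: mat2_mult_assoc)

lemma cf_mat_rev: "cf_mat (rev xs) = mat2_transpose (cf_mat xs)"
proof (induction xs)
  case Nil
  then show ?case by simp
next
  case (Cons a xs)
  have "cf_mat (rev (a # xs)) = mat2_mult (mat2_transpose (cf_mat xs)) (a,1,1,0)"
    using Cons by (simp add: cf_mat_snoc)
  also have "\<dots> = mat2_transpose (mat2_mult (a,1,1,0) (cf_mat xs))"
    by (simp add: mat2_transpose_mult)
  finally show ?case by simp
qed

lemma cf_convergents_rev:
  "cf_p (rev xs) = cf_p xs" "cf_pprev (rev xs) = cf_q xs"
  "cf_q (rev xs) = cf_pprev xs" "cf_qprev (rev xs) = cf_qprev xs"
  by (cases "cf_mat xs"; simp add: cf_mat_rev cf_p_def cf_pprev_def cf_q_def cf_qprev_def)+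

lemma cf_p_Nil: "cf_p [] = 1"
  and cf_q_Nil: "cf_q [] = 0"
  by (simp_all add: cf_p_def cf_q_def)

lemma cf_p_Cons: "cf_p (a # xs) = a * cf_p xs + cf_q xs"
  and cf_q_Cons: "cf_q (a # xs) = cf_p xs"
  by (cases "cf_mat xs"; simp add: cf_p_def cf_q_def)+

lemma cf_p_pos: "\<forall>a\<in>set xs. a > 0 \<Longrightarrow> cf_p xs > 0"
  by (induction xs) (auto simp: cf_p_Cons cf_p_Nil)

lemma cf_q_pos: "xs \<noteq> [] \<Longrightarrow> \<forall>a\<in>set xs. a > 0 \<Longrightarrow> cf_q xs > 0"
  by (cases xs) (auto simp: cf_q_Cons cf_p_pos)

lemma cf_val_eq_convergent:
  "xs \<noteq> [] \<Longrightarrow> \<forall>a\<in>set xs. a > 0 \<Longrightarrow> cf_val xs = of_nat (cf_p xs) / of_nat (cf_q xs)"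
proof (induction xs rule: cf_val.induct)
  case (2 a)
  then show ?case by (simp add: cf_p_Cons cf_q_Cons cf_p_Nil cf_q_Nil)
next
  case (3 a b bs)
  define P Q where "P = cf_p (b # bs)" and "Q = cf_q (b # bs)"
  have "P > 0" using "3.prems" unfolding P_def by (intro cf_p_pos) simp
  moreover have "cf_val (b # bs) = of_nat P / of_nat Q" using 3 by (simp add: P_def Q_def)
  ultimately have "cf_val (a # b # bs) = of_nat (a * P + Q) / of_nat P"
    by (simp add: field_simps)
  then show ?case by (simp add: cf_p_Cons[of a] cf_q_Cons[of a] P_def Q_def)
qed simp

lemma m_palindromic_iff_convergents:
  assumes "xs \<noteq> []" and "\<forall>a\<in>set xs. a > 0"
  shows "m_palindromic m xs \<longleftrightarrow> m * cf_q xs = cf_pprev xs"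
proof -
  let ?p = "cf_p xs" and ?q = "cf_q xs" and ?p' = "cf_pprev xs"
  have pos: "?p > 0" "?q > 0" "?p' > 0"
    using assms cf_p_pos cf_q_pos cf_q_pos[of "rev xs"] by (auto simp: cf_convergents_rev)
  have val_rev: "cf_val (rev xs) = of_nat ?p / of_nat ?p'"
    using assms cf_val_eq_convergent[of "rev xs"] by (simp add: cf_convergents_rev)
  have "m_palindromic m xs \<longleftrightarrow> (of_nat ?p / of_nat ?q :: rat) = of_nat m * (of_nat ?p / of_nat ?p')"
    using assms by (simp add: m_palindromic_def val_rev cf_val_eq_convergent)
  also have "\<dots> \<longleftrightarrow> (of_nat ?p * of_nat ?p' :: rat) = of_nat ?p * of_nat (m * ?q)"
    using pos by (simp add: field_simps)
  also have "\<dots> \<longleftrightarrow> m * ?q = ?p'"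
    using pos by (simp del: of_nat_mult) (simp only: of_nat_eq_iff eq_commute)
  finally show ?thesis .
qed

theorem lemma3p2:
  fixes A :: "nat list" and i m :: nat
  assumes "i \<ge> 1" and "m \<ge> 1"
    and "length A = i + 1" and "\<forall>a\<in>set A. a > 0"
  shows "((cf_p A, cf_q A, cf_pprev A, cf_qprev A)
           = (cf_p (rev A), cf_pprev (rev A), cf_q (rev A), cf_qprev (rev A)))
    \<and> (m_palindromic m A \<longleftrightarrow>
           (cf_p A, m * cf_q A, cf_pprev A, cf_qprev A)
           = (cf_p (rev A), cf_q (rev A), m * cf_pprev (rev A), cf_qprev (rev A)))
    \<and> (m_palindromic m A \<longleftrightarrow> m * cf_q A = cf_pprev A)"
proof -
  have "A \<noteq> []" using assms(3) by auto
  then have "m_palindromic m A \<longleftrightarrow> m * cf_q A = cf_pprev A"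
    using assms(4) by (rule m_palindromic_iff_convergents)
  then show ?thesis by (auto simp: cf_convergents_rev)
qed

end
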